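(* Let $G$ be a Garside group with Garside monoid $M$ (so $M\subset G$). For every $a\in G$, the centralizer $Z(a)=\{c\in G:\ ca=ac\}$ is generated (as a group) by elements of $M$, i.e. $Z(a)$ is generated by $Z(a)\cap M$.
   Context: A monoid $M$ is atomic if it is generated by its atoms (elements $x\neq 1$ such that $x=yz$ implies $y=1$ or $z=1$) and for every $a\in M$ there is $N_a>0$ such that $a$ is not a product of more than $N_a$ atoms. A Garside monoid is an atomic, left and right cancellative monoid in which every pair of elements has left and right least common multiples and greatest common divisors, and which has a Garside element $\Delta$: an element whose left divisors coincide with its right divisors, form a finite set, and generate $M$. A Garside group is the group of fractions $G$ of a Garside monoid $M$; $M$ embeds in $G$ and its elements are called positive. (It is known that some power $\Delta^k$, $k\geq 1$, is central in $G$, and every element of $G$ can be multiplied by a suitable power of $\Delta^{k}$ to become positive.) *)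

theory Defs
  imports "HOL-Algebra.Algebra"
begin

definition mprod :: "('a, 'b) monoid_scheme \<Rightarrow> 'a list \<Rightarrow> 'a" where
  "mprod M xs = foldr (\<lambda>x y. x \<otimes>\<^bsub>M\<^esub> y) xs \<one>\<^bsub>M\<^esub>"

definition ldiv :: "('a, 'b) monoid_scheme \<Rightarrow> 'a \<Rightarrow> 'a \<Rightarrow> bool" where
  "ldiv M a b \<longleftrightarrow> (\<exists>c\<in>carrier M. a \<otimes>\<^bsub>M\<^esub> c = b)"

definition rdiv :: "('a, 'b) monoid_scheme \<Rightarrow> 'a \<Rightarrow> 'a \<Rightarrow> bool" where
  "rdiv M a b \<longleftrightarrow> (\<exists>c\<in>carrier M. c \<otimes>\<^bsub>M\<^esub> a = b)"

definition is_atom :: "('a, 'b) monoid_scheme \<Rightarrow> 'a \<Rightarrow> bool" where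
  "is_atom M x \<longleftrightarrow> x \<in> carrier M \<and> x \<noteq> \<one>\<^bsub>M\<^esub> \<and>
     (\<forall>y\<in>carrier M. \<forall>z\<in>carrier M. x = y \<otimes>\<^bsub>M\<^esub> z \<longrightarrow> y = \<one>\<^bsub>M\<^esub> \<or> z = \<one>\<^bsub>M\<^esub>)"

definition monoid_generates :: "('a, 'b) monoid_scheme \<Rightarrow> 'a set \<Rightarrow> bool" where
  "monoid_generates M S \<longleftrightarrow>
     (\<forall>a\<in>carrier M. \<exists>xs. set xs \<subseteq> S \<and> mprod M xs = a)"

definition atomic_monoid :: "('a, 'b) monoid_scheme \<Rightarrow> bool" where
  "atomic_monoid M \<longleftrightarrow> monoid M \<and>
     monoid_generates M {x. is_atom M x} \<and>
     (\<forall>a\<in>carrier M. \<exists>N::nat. N > 0 \<and>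
        (\<forall>xs. set xs \<subseteq> {x. is_atom M x} \<and> mprod M xs = a \<longrightarrow> length xs \<le> N))"

definition cancellative_monoid :: "('a, 'b) monoid_scheme \<Rightarrow> bool" where
  "cancellative_monoid M \<longleftrightarrow>
     (\<forall>a\<in>carrier M. \<forall>b\<in>carrier M. \<forall>c\<in>carrier M.
        (a \<otimes>\<^bsub>M\<^esub> b = a \<otimes>\<^bsub>M\<^esub> c \<longrightarrow> b = c) \<and>
        (b \<otimes>\<^bsub>M\<^esub> a = c \<otimes>\<^bsub>M\<^esub> a \<longrightarrow> b = c))"

definition is_lcm_wrt :: "('a, 'b) monoid_scheme \<Rightarrow> ('a \<Rightarrow> 'a \<Rightarrow> bool) \<Rightarrow> 'a \<Rightarrow> 'a \<Rightarrow> 'a \<Rightarrow> bool" where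
  "is_lcm_wrt M D a b m \<longleftrightarrow> m \<in> carrier M \<and> D a m \<and> D b m \<and>
     (\<forall>d\<in>carrier M. D a d \<and> D b d \<longrightarrow> D m d)"

definition is_gcd_wrt :: "('a, 'b) monoid_scheme \<Rightarrow> ('a \<Rightarrow> 'a \<Rightarrow> bool) \<Rightarrow> 'a \<Rightarrow> 'a \<Rightarrow> 'a \<Rightarrow> bool" where
  "is_gcd_wrt M D a b g \<longleftrightarrow> g \<in> carrier M \<and> D g a \<and> D g b \<and>
     (\<forall>d\<in>carrier M. D d a \<and> D d b \<longrightarrow> D d g)"

definition garside_element :: "('a, 'b) monoid_scheme \<Rightarrow> 'a \<Rightarrow> bool" where
  "garside_element M \<Delta> \<longleftrightarrow> \<Delta> \<in> carrier M \<and>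
     {x\<in>carrier M. ldiv M x \<Delta>} = {x\<in>carrier M. rdiv M x \<Delta>} \<and>
     finite {x\<in>carrier M. ldiv M x \<Delta>} \<and>
     monoid_generates M {x\<in>carrier M. ldiv M x \<Delta>}"

definition garside_monoid :: "('a, 'b) monoid_scheme \<Rightarrow> bool" where
  "garside_monoid M \<longleftrightarrow> atomic_monoid M \<and> cancellative_monoid M \<and>
     (\<forall>a\<in>carrier M. \<forall>b\<in>carrier M.
        (\<exists>m. is_lcm_wrt M (ldiv M) a b m) \<and> (\<exists>m. is_lcm_wrt M (rdiv M) a b m) \<and>
        (\<exists>g. is_gcd_wrt M (ldiv M) a b g) \<and> (\<exists>g. is_gcd_wrt M (rdiv M) a b g)) \<and>
     (\<exists>\<Delta>. garside_element M \<Delta>)"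

text \<open>G is a Garside group with Garside monoid M (M a subset of G): M is a submonoid of the
  group G, M with the induced operation is a Garside monoid, and G is the group of fractions
  of M, i.e. G is generated as a group by M (M being an Ore monoid embedded in G, the
  subgroup generated by M is its group of fractions).\<close>
definition garside_group :: "('a, 'b) monoid_scheme \<Rightarrow> 'a set \<Rightarrow> bool" where
  "garside_group G M \<longleftrightarrow> group G \<and> submonoid M G \<and>
     garside_monoid (G\<lparr>carrier := M\<rparr>) \<and> generate G M = carrier G"

definition centralizer :: "('a, 'b) monoid_scheme \<Rightarrow> 'a \<Rightarrow> 'a set" where
  "centralizer G a = {c \<in> carrier G. c \<otimes>\<^bsub>G\<^esub> a = a \<otimes>\<^bsub>G\<^esub> c}"

end

theory Submission
  imports Defs
begin

(* Conjugation by the Garside element Delta maps the finite set of divisors of Delta into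
   itself, and these divisors generate G; hence some power z = Delta^k is central in G.
   Since Delta x^-1 is positive for every divisor x, every g in G becomes positive after
   multiplication by a power of z. If c centralizes a, so does the positive element z^n c,
   and c = (z^n)^-1 (z^n c) is a quotient of positive elements of the centralizer. *)

lemma (in submonoid) nat_pow_mem:
  "x \<in> H \<Longrightarrow> x [^]\<^bsub>G\<^esub> (n::nat) \<in> H"
  by (induction n) simp_all

lemma (in group) subgroup_centralizer:
  assumes "a \<in> carrier G"
  shows "subgroup (centralizer G a) G"
proof (rule subgroupI)
  show "centralizer G a \<subseteq> carrier G" "centralizer G a \<noteq> {}"
    using assms by (auto simp: centralizer_def)
next
  fix c assume "c \<in> centralizer G a"
  then have c: "c \<in> carrier G" "c \<otimes> a = a \<otimes> c" by (auto simp: centralizer_def)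
  have "inv c \<otimes> a = inv c \<otimes> (a \<otimes> c) \<otimes> inv c"
    using c assms by (simp add: m_assoc)
  also have "\<dots> = inv c \<otimes> (c \<otimes> a) \<otimes> inv c"
    using c by simp
  also have "\<dots> = a \<otimes> inv c"
    using c(1) assms by (simp flip: m_assoc)
  finally show "inv c \<in> centralizer G a" using c by (simp add: centralizer_def)
next
  fix c d assume "c \<in> centralizer G a" "d \<in> centralizer G a"
  then show "c \<otimes> d \<in> centralizer G a"
    using assms by (simp add: centralizer_def m_assoc) (metis m_assoc)
qed

lemma (in group) commute_generate:
  assumes "S \<subseteq> carrier G" "z \<in> carrier G" "\<And>s. s \<in> S \<Longrightarrow> z \<otimes> s = s \<otimes> z"
    and "g \<in> generate G S"
  shows "z \<otimes> g = g \<otimes> z"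
proof -
  have "S \<subseteq> centralizer G z" using assms by (auto simp: centralizer_def)
  then have "generate G S \<subseteq> centralizer G z"
    using generate_subgroup_incl subgroup_centralizer assms(2) by blast
  then show ?thesis using assms(4) by (auto simp: centralizer_def)
qed

lemma (in group) central_nat_pow:
  assumes "z \<in> carrier G" "\<And>g. g \<in> carrier G \<Longrightarrow> z \<otimes> g = g \<otimes> z" "g \<in> carrier G"
  shows "z [^] (n::nat) \<otimes> g = g \<otimes> z [^] n"
proof -
  have "z \<in> centralizer G g" using assms by (simp add: centralizer_def)
  then have "z [^] n \<in> centralizer G g"
    using subgroup.subgroup_is_submonoid[OF subgroup_centralizer[OF assms(3)]]
    by (rule submonoid.nat_pow_mem[rotated])
  then show ?thesis by (simp add: centralizer_def)
qed

lemma (in group) conj_invariant_finite_pow_commute: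
  assumes "finite S" "S \<subseteq> carrier G" "g \<in> carrier G"
    and conj: "\<And>x. x \<in> S \<Longrightarrow> inv g \<otimes> x \<otimes> g \<in> S"
  obtains k :: nat where "k > 0" "\<And>x. x \<in> S \<Longrightarrow> g [^] k \<otimes> x = x \<otimes> g [^] k"
proof -
  have conj_pow: "inv (g [^] n) \<otimes> x \<otimes> g [^] n \<in> S" if "x \<in> S" for x and n :: nat
  proof (induction n)
    case (Suc n)
    have "inv (g [^] Suc n) \<otimes> x \<otimes> g [^] Suc n = inv g \<otimes> (inv (g [^] n) \<otimes> x \<otimes> g [^] n) \<otimes> g"
      using that assms(2,3) by (auto simp: inv_mult_group m_assoc)
    then show ?case using Suc.IH conj by simp
  qed (use that assms(2) in auto)
  define f where "f n = restrict (\<lambda>x. inv (g [^] n) \<otimes> x \<otimes> g [^] n) S" for n :: nat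
  have "range f \<subseteq> S \<rightarrow>\<^sub>E S" using conj_pow by (auto simp: f_def)
  then have "finite (range f)" using assms(1) by (simp add: finite_PiE finite_subset)
  then have "\<not> inj f" using finite_imageD by blast
  then obtain i j where "i < j" "f i = f j"
    unfolding inj_def by (metis linorder_neq_iff)
  show thesis
  proof
    show "j - i > 0" using \<open>i < j\<close> by simp
    fix x assume x: "x \<in> S"
    define h where "h = g [^] (j - i)"
    have hG: "h \<in> carrier G" "x \<in> carrier G" using x assms(2,3) by (auto simp: h_def)
    have "g [^] j = h \<otimes> g [^] i"
      using \<open>i < j\<close> assms(3) by (simp add: h_def nat_pow_mult)
    then have "inv (g [^] i) \<otimes> x \<otimes> g [^] i = inv (g [^] i) \<otimes> (inv h \<otimes> x \<otimes> h) \<otimes> g [^] i"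
      using fun_cong[OF \<open>f i = f j\<close>, of x] x hG assms(3)
      by (simp add: f_def inv_mult_group m_assoc)
    then have "x = inv h \<otimes> x \<otimes> h"
      using hG assms(3) by (metis inv_closed l_cancel m_closed nat_pow_closed r_cancel)
    then show "g [^] (j - i) \<otimes> x = x \<otimes> g [^] (j - i)"
      using hG by (metis h_def inv_closed m_assoc m_closed r_inv l_one)
  qed
qed

lemma (in group) central_pow_mult_mem_submonoid:
  assumes M: "submonoid M G" and "z \<in> M" and central: "\<And>g. g \<in> carrier G \<Longrightarrow> z \<otimes> g = g \<otimes> z"
    and "S \<subseteq> M" and inv_S: "\<And>s. s \<in> S \<Longrightarrow> z \<otimes> inv s \<in> M"
    and "g \<in> generate G S"
  shows "\<exists>n. z [^] (n::nat) \<otimes> g \<in> M"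
  using \<open>g \<in> generate G S\<close>
proof (induction rule: generate.induct)
  case one
  show ?case using M by (auto intro: exI[of _ 0] simp: submonoid.one_closed)
next
  case (incl s)
  then show ?case using \<open>S \<subseteq> M\<close> M submonoid.subset by (intro exI[of _ 0]) fastforce
next
  case (inv s)
  then show ?case using inv_S M submonoid.subset \<open>z \<in> M\<close> by (intro exI[of _ 1]) fastforce
next
  case (eng h1 h2)
  have SG: "S \<subseteq> carrier G" "z \<in> carrier G" using assms submonoid.subset by blast+
  then have hG: "h1 \<in> carrier G" "h2 \<in> carrier G"
    using eng.hyps generate_in_carrier by blast+
  obtain n1 n2 :: nat where n: "z [^] n1 \<otimes> h1 \<in> M" "z [^] n2 \<otimes> h2 \<in> M"
    using eng.IH by blast
  have "z [^] (n1 + n2) \<otimes> (h1 \<otimes> h2) = z [^] n1 \<otimes> (z [^] n2 \<otimes> h1) \<otimes> h2"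
    using hG SG by (simp add: m_assoc flip: nat_pow_mult)
  also have "\<dots> = (z [^] n1 \<otimes> h1) \<otimes> (z [^] n2 \<otimes> h2)"
    using hG SG by (simp add: central_nat_pow[OF SG(2) central hG(1), of n2] m_assoc)
  finally show ?case using submonoid.m_closed[OF M n] by metis
qed

lemma (in group) centralizer_eq_generate_positive_part:
  assumes M: "submonoid M G" and "z \<in> M" and central: "\<And>g. g \<in> carrier G \<Longrightarrow> z \<otimes> g = g \<otimes> z"
    and positive: "\<And>g. g \<in> carrier G \<Longrightarrow> \<exists>n. z [^] (n::nat) \<otimes> g \<in> M"
    and a: "a \<in> carrier G"
  shows "centralizer G a = generate G (centralizer G a \<inter> M)"
proof
  show "generate G (centralizer G a \<inter> M) \<subseteq> centralizer G a"
    using generate_subgroup_incl[OF Int_lower1 subgroup_centralizer[OF a]] .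
next
  show "centralizer G a \<subseteq> generate G (centralizer G a \<inter> M)"
  proof
    fix c assume c: "c \<in> centralizer G a"
    then have cG: "c \<in> carrier G" by (simp add: centralizer_def)
    have zG: "z \<in> carrier G" using M \<open>z \<in> M\<close> submonoid.subset by blast
    obtain n :: nat where "z [^] n \<otimes> c \<in> M" using positive[OF cG] by blast
    moreover have zn: "z [^] n \<in> centralizer G a"
      using central_nat_pow[OF zG central a] zG by (simp add: centralizer_def)
    moreover have "z [^] n \<in> M"
      using submonoid.nat_pow_mem[OF M \<open>z \<in> M\<close>] .
    moreover have "z [^] n \<otimes> c \<in> centralizer G a"
      using subgroup.m_closed[OF subgroup_centralizer[OF a] zn c] .
    ultimately have "inv (z [^] n) \<otimes> (z [^] n \<otimes> c) \<in> generate G (centralizer G a \<inter> M)"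
      by (blast intro: generate.inv generate.incl generate.eng)
    then show "c \<in> generate G (centralizer G a \<inter> M)"
      using cG zG by (simp flip: m_assoc)
  qed
qed

lemma foldr_mult_mem_generate:
  "set xs \<subseteq> S \<Longrightarrow> foldr (\<otimes>\<^bsub>G\<^esub>) xs \<one>\<^bsub>G\<^esub> \<in> generate G S"
  by (induction xs) (auto intro: generate.one generate.incl generate.eng)

locale garside_setting = group G + submonoid M G for G (structure) and M +
  fixes \<Delta>
  assumes garside_element: "garside_element (G\<lparr>carrier := M\<rparr>) \<Delta>"
    and generate_M: "generate G M = carrier G"
begin

definition divisors :: "'a set" where
  "divisors = {x \<in> M. \<exists>c\<in>M. x \<otimes> c = \<Delta>}"

lemma
  shows Delta_mem: "\<Delta> \<in> M"
    and finite_divisors: "finite divisors"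
    and divisors_right: "divisors = {x \<in> M. \<exists>c\<in>M. c \<otimes> x = \<Delta>}"
    and subset_generate_divisors: "M \<subseteq> generate G divisors"
proof -
  have left: "{x \<in> carrier (G\<lparr>carrier := M\<rparr>). ldiv (G\<lparr>carrier := M\<rparr>) x \<Delta>} = divisors"
    by (simp add: divisors_def ldiv_def)
  note Delta = garside_element[unfolded garside_element_def left]
  show "\<Delta> \<in> M" "finite divisors" "divisors = {x \<in> M. \<exists>c\<in>M. c \<otimes> x = \<Delta>}"
    using Delta by (auto simp: rdiv_def)
  show "M \<subseteq> generate G divisors"
  proof
    fix x assume "x \<in> M"
    then obtain xs where "set xs \<subseteq> divisors" "foldr (\<otimes>) xs \<one> = x"
      using Delta by (auto simp: monoid_generates_def mprod_def)
    then show "x \<in> generate G divisors" using foldr_mult_mem_generate by metis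
  qed
qed

lemma Delta_carrier: "\<Delta> \<in> carrier G"
  using Delta_mem subset by blast

lemma divisors_carrier: "divisors \<subseteq> carrier G"
  using subset by (auto simp: divisors_def)

lemma generate_divisors: "generate G divisors = carrier G"
  using generate_subgroup_incl[OF subset_generate_divisors generate_is_subgroup[OF divisors_carrier]]
    generate_M generate_incl[OF divisors_carrier] by blast

lemma conj_Delta_divisor:
  assumes "x \<in> divisors"
  shows "inv \<Delta> \<otimes> x \<otimes> \<Delta> \<in> divisors"
proof -
  obtain y where y: "y \<in> M" "x \<otimes> y = \<Delta>" and "x \<in> M" using assms by (auto simp: divisors_def)
  then have "y \<in> divisors" by (auto simp: divisors_right)
  then obtain w where w: "w \<in> M" "y \<otimes> w = \<Delta>" by (auto simp: divisors_def)
  have G: "x \<in> carrier G" "y \<in> carrier G" "w \<in> carrier G" using \<open>x \<in> M\<close> y w subset by auto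
  have "inv \<Delta> \<otimes> x \<otimes> \<Delta> = inv \<Delta> \<otimes> (x \<otimes> y) \<otimes> w"
    using G Delta_carrier by (simp flip: w(2) add: m_assoc)
  also have "\<dots> = w" using G Delta_carrier y(2) by simp
  finally have "inv \<Delta> \<otimes> x \<otimes> \<Delta> = w" .
  then show ?thesis using w y(1) by (auto simp: divisors_right)
qed

lemma Delta_mult_inv_divisor:
  assumes "x \<in> divisors"
  shows "\<Delta> \<otimes> inv x \<in> M"
proof -
  obtain c where c: "c \<in> M" "c \<otimes> x = \<Delta>" and "x \<in> M" using assms by (auto simp: divisors_right)
  then have "\<Delta> \<otimes> inv x = c" using subset by (auto simp flip: c(2) simp: m_assoc)
  then show ?thesis using c by simp
qed

lemma exists_central_positive:
  obtains z where "z \<in> M" "\<And>g. g \<in> carrier G \<Longrightarrow> z \<otimes> g = g \<otimes> z"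
    "\<And>g. g \<in> carrier G \<Longrightarrow> \<exists>n. z [^] (n::nat) \<otimes> g \<in> M"
proof -
  obtain k :: nat where "k > 0" and commute: "\<And>x. x \<in> divisors \<Longrightarrow> \<Delta> [^] k \<otimes> x = x \<otimes> \<Delta> [^] k"
    using conj_invariant_finite_pow_commute[OF finite_divisors divisors_carrier Delta_carrier]
      conj_Delta_divisor by blast
  have central: "\<Delta> [^] k \<otimes> g = g \<otimes> \<Delta> [^] k" if "g \<in> carrier G" for g
    using commute_generate[OF divisors_carrier _ commute] that Delta_carrier
    by (simp add: generate_divisors)
  have inv_divisor: "\<Delta> [^] k \<otimes> inv x \<in> M" if "x \<in> divisors" for x
  proof -
    have "\<Delta> [^] k = \<Delta> [^] (k - 1) \<otimes> \<Delta>"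
      using \<open>k > 0\<close> by (cases k) simp_all
    then have "\<Delta> [^] k \<otimes> inv x = \<Delta> [^] (k - 1) \<otimes> (\<Delta> \<otimes> inv x)"
      using that divisors_carrier Delta_carrier by (auto simp: m_assoc)
    then show ?thesis
      using Delta_mult_inv_divisor[OF that] nat_pow_mem[OF Delta_mem] by simp
  qed
  have "divisors \<subseteq> M" by (auto simp: divisors_def)
  show thesis
  proof (rule that[OF nat_pow_mem[OF Delta_mem] central])
    fix g assume "g \<in> carrier G"
    then show "\<exists>n. (\<Delta> [^] k) [^] (n::nat) \<otimes> g \<in> M"
      using central_pow_mult_mem_submonoid[OF is_submonoid nat_pow_mem[OF Delta_mem]
          central \<open>divisors \<subseteq> M\<close> inv_divisor] generate_divisors
      by blast
  qed
qed

end

theorem lemma3p1: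
  fixes G :: "('a, 'b) monoid_scheme" and M :: "'a set" and a :: 'a
  assumes "garside_group G M"
    and "a \<in> carrier G"
  shows "centralizer G a = generate G (centralizer G a \<inter> M)"
proof -
  have "group G" "submonoid M G" "generate G M = carrier G"
    and "garside_monoid (G\<lparr>carrier := M\<rparr>)"
    using assms(1) by (auto simp: garside_group_def)
  then obtain \<Delta> where "garside_setting G M \<Delta>"
    by (auto simp: garside_monoid_def garside_setting_def garside_setting_axioms_def)
  then interpret garside_setting G M \<Delta> .
  obtain z where "z \<in> M" "\<And>g. g \<in> carrier G \<Longrightarrow> z \<otimes>\<^bsub>G\<^esub> g = g \<otimes>\<^bsub>G\<^esub> z"
    "\<And>g. g \<in> carrier G \<Longrightarrow> \<exists>n. z [^]\<^bsub>G\<^esub> (n::nat) \<otimes>\<^bsub>G\<^esub> g \<in> M"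
    using exists_central_positive by blast
  then show ?thesis
    using centralizer_eq_generate_positive_part[OF is_submonoid _ _ _ assms(2)] by blast
qed

end
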